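(* Let $n$ be a positive integer and let $k, c$ be complex numbers. Then \[ \sum_{\pi\in\mathcal{D}(n)} (-1)^{\#(\pi)-1} \sum_{j=1}^{s(\pi)} j^k c^j = \sum_{\substack{\pi\in\mathcal{P}(n)\\ \nu_d(\pi)\ge 2}} \sum_{j=0}^{\nu_d(\pi)-1} (-1)^j \binom{\nu_d(\pi)-1}{j} \bigl(\ell(\pi)-j\bigr)^k c^{\ell(\pi)-j} + \sigma_{k,c}(n), \] where $\sigma_{k,c}(n) = \sum_{d\mid n} d^k c^d$.
   Context: $\mathcal{P}(n)$ is the set of all partitions of $n$ and $\mathcal{D}(n)$ the set of partitions of $n$ into distinct parts. For a partition $\pi$: $s(\pi)$ is its smallest part, $\ell(\pi)$ its largest part, $\#(\pi)$ its number of parts, and $\nu_d(\pi)$ the number of distinct part sizes of $\pi$. For a positive integer $m$ and complex $k$, $m^k=e^{k\log m}$ with the real logarithm. *)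

theory Defs
  imports "HOL-Analysis.Analysis" "HOL-Library.Multiset"
begin

definition partitions :: "nat \<Rightarrow> nat multiset set" where
  "partitions n = {M. (\<forall>x\<in>#M. 0 < x) \<and> sum_mset M = n}"

definition distinct_partitions :: "nat \<Rightarrow> nat multiset set" where
  "distinct_partitions n = {M \<in> partitions n. \<forall>x. count M x \<le> 1}"

definition smallest_part :: "nat multiset \<Rightarrow> nat" where
  "smallest_part M = Min (set_mset M)"

definition largest_part :: "nat multiset \<Rightarrow> nat" where
  "largest_part M = Max (set_mset M)"

definition num_parts :: "nat multiset \<Rightarrow> nat" where
  "num_parts M = size M"

definition num_distinct_parts :: "nat multiset \<Rightarrow> nat" where
  "num_distinct_parts M = card (set_mset M)"

text \<open>m^k for positive integer m and complex k: exp(k log m); complex powr agrees.\<close>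
definition sigma_kc :: "complex \<Rightarrow> complex \<Rightarrow> nat \<Rightarrow> complex" where
  "sigma_kc k c n = (\<Sum>d | d dvd n. (of_nat d) powr k * c ^ d)"

end

theory Submission
  imports Defs
begin

text \<open>
  Both sides are linear in the weights \<open>f j = j powr k * c ^ j\<close>, so it suffices to compare the
  coefficients of each \<open>f m\<close>.  Telescoping in \<open>m\<close> (Pascal's rule on the right) reduces this
  to: the signed number of distinct partitions of \<open>n\<close> with smallest part \<open>m\<close> equals the sum of
  \<open>(-1) ^ (\<ell> - m) * (\<nu> choose (\<ell> - m))\<close> over the partitions with \<open>\<nu>\<close> part sizes and largest
  part \<open>\<ell> \<ge> m\<close>.

  After conjugation that sum counts, with sign \<open>(-1) ^ card U\<close>, pairs of a partition \<open>p\<close> and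
  a set \<open>U\<close> of its part sizes with \<open>card U + m = #p\<close>.  Removing \<open>U\<close> from \<open>p\<close> leaves a partition
  with \<open>m\<close> parts; its conjugate minus one part \<open>m\<close> is a partition \<open>\<gamma>\<close> with parts \<open>\<le> m\<close> and
  \<open>\<Sum>U + |\<gamma>| + m = n\<close>.  Moving the least element \<open>\<le> m\<close> of \<open>U \<union> \<gamma>\<close> from one side to the other
  is a sign-reversing involution, whose fixed points (\<open>\<gamma>\<close> empty, \<open>U\<close> above \<open>m\<close>) are exactly
  the distinct partitions \<open>{m} \<union> U\<close> with smallest part \<open>m\<close>.

  The partitions with a single part size \<open>d\<close> contribute \<open>sigma_kc k c n\<close>.
\<close>

section \<open>Conjugate partitions\<close>

definition parts_ge :: "nat multiset \<Rightarrow> nat \<Rightarrow> nat" where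
  "parts_ge \<pi> i = size {#x \<in># \<pi>. i \<le> x#}"

definition conjugate :: "nat multiset \<Rightarrow> nat multiset" where
  "conjugate \<pi> = image_mset (parts_ge \<pi>) (mset_set {i. 0 < i \<and> 0 < parts_ge \<pi> i})"

lemma parts_ge_empty [simp]: "parts_ge {#} i = 0"
  by (simp add: parts_ge_def)

lemma parts_ge_add_mset [simp]:
  "parts_ge (add_mset x \<pi>) i = parts_ge \<pi> i + (if i \<le> x then 1 else 0)"
  by (simp add: parts_ge_def)

lemma parts_ge_pos_iff: "0 < parts_ge \<pi> i \<longleftrightarrow> (\<exists>x\<in>#\<pi>. i \<le> x)"
  by (induction \<pi>) auto

lemma parts_ge_Suc: "parts_ge \<pi> x = parts_ge \<pi> (Suc x) + count \<pi> x"
  by (induction \<pi>) auto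

lemma parts_ge_antimono: "i \<le> i' \<Longrightarrow> parts_ge \<pi> i' \<le> parts_ge \<pi> i"
  by (induction \<pi>) auto

lemma parts_ge_1: "\<forall>x\<in>#\<pi>. 0 < x \<Longrightarrow> parts_ge \<pi> 1 = size \<pi>"
  by (induction \<pi>) auto

lemma parts_ge_inject:
  assumes "\<forall>x\<in>#\<pi>. 0 < x" "\<forall>x\<in>#\<sigma>. 0 < x" "\<And>i. 0 < i \<Longrightarrow> parts_ge \<pi> i = parts_ge \<sigma> i"
  shows "\<pi> = \<sigma>"
proof (rule multiset_eqI)
  fix x
  show "count \<pi> x = count \<sigma> x"
  proof (cases "x = 0")
    case True
    then show ?thesis using assms(1,2) by (metis count_eq_zero_iff less_irrefl)
  next
    case False
    then show ?thesis
      using assms(3)[of x] assms(3)[of "Suc x"] parts_ge_Suc[of \<pi> x] parts_ge_Suc[of \<sigma> x] by simp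
  qed
qed

lemma member_le_sum_mset_nat: "x \<in># (\<pi>::nat multiset) \<Longrightarrow> x \<le> sum_mset \<pi>"
  by (induction \<pi>) auto

lemma parts_ge_support_subset: "{i. 0 < i \<and> 0 < parts_ge \<pi> i} \<subseteq> {1..sum_mset \<pi>}"
  by (auto simp: parts_ge_pos_iff dest: member_le_sum_mset_nat)

lemma finite_parts_ge_support: "finite {i. 0 < i \<and> 0 < parts_ge \<pi> i}"
  using parts_ge_support_subset finite_subset by blast

lemma parts_ge_support_eq:
  assumes "\<pi> \<noteq> {#}"
  shows "{i. 0 < i \<and> 0 < parts_ge \<pi> i} = {1..Max (set_mset \<pi>)}"
proof (intro equalityI subsetI)
  fix i
  assume "i \<in> {1..Max (set_mset \<pi>)}"
  moreover have "Max (set_mset \<pi>) \<in># \<pi>" using assms by simp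
  ultimately show "i \<in> {i. 0 < i \<and> 0 < parts_ge \<pi> i}" by (auto simp: parts_ge_pos_iff)
next
  fix i
  assume "i \<in> {i. 0 < i \<and> 0 < parts_ge \<pi> i}"
  then obtain x where "x \<in># \<pi>" "i \<le> x" "0 < i" by (auto simp: parts_ge_pos_iff)
  then show "i \<in> {1..Max (set_mset \<pi>)}" using assms by (auto simp: Max_ge_iff)
qed

lemma set_mset_conjugate:
  "set_mset (conjugate \<pi>) = parts_ge \<pi> ` {i. 0 < i \<and> 0 < parts_ge \<pi> i}"
  using finite_parts_ge_support by (simp add: conjugate_def)

lemma conjugate_pos: "x \<in># conjugate \<pi> \<Longrightarrow> 0 < x"
  by (auto simp: set_mset_conjugate)

lemma parts_ge_conjugate:
  assumes "0 < j"
  shows "parts_ge (conjugate \<pi>) j = card {i. 0 < i \<and> j \<le> parts_ge \<pi> i}"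
proof -
  have "parts_ge (conjugate \<pi>) j
      = size (filter_mset (\<lambda>i. j \<le> parts_ge \<pi> i) (mset_set {i. 0 < i \<and> 0 < parts_ge \<pi> i}))"
    by (simp add: parts_ge_def conjugate_def filter_mset_image_mset)
  also have "\<dots> = card {i \<in> {i. 0 < i \<and> 0 < parts_ge \<pi> i}. j \<le> parts_ge \<pi> i}"
    using finite_parts_ge_support by simp
  also have "{i \<in> {i. 0 < i \<and> 0 < parts_ge \<pi> i}. j \<le> parts_ge \<pi> i} = {i. 0 < i \<and> j \<le> parts_ge \<pi> i}"
    using assms by auto
  finally show ?thesis .
qed

lemma le_card_down_closed_iff:
  assumes "finite A" "\<And>a b. a \<in> A \<Longrightarrow> 0 < b \<Longrightarrow> b \<le> a \<Longrightarrow> b \<in> A" "0 \<notin> A" "0 < (j::nat)"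
  shows "j \<le> card A \<longleftrightarrow> j \<in> A"
proof
  assume "j \<in> A"
  then have "{1..j} \<subseteq> A" using assms(2) by auto
  from card_mono[OF assms(1) this] show "j \<le> card A" by simp
next
  assume "j \<le> card A"
  show "j \<in> A"
  proof (rule ccontr)
    assume "j \<notin> A"
    have "A \<subseteq> {1..<j}"
    proof
      fix a assume "a \<in> A"
      then have "\<not> j \<le> a" using assms(2)[OF _ assms(4)] \<open>j \<notin> A\<close> by blast
      moreover have "a \<noteq> 0" using \<open>a \<in> A\<close> assms(3) by metis
      ultimately show "a \<in> {1..<j}" by simp
    qed
    from card_mono[OF _ this] have "card A \<le> j - 1" by simp
    then show False using \<open>j \<le> card A\<close> assms(4) by linarith
  qed
qed

lemma le_parts_ge_conjugate_iff:
  assumes "0 < i" "0 < j"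
  shows "i \<le> parts_ge (conjugate \<pi>) j \<longleftrightarrow> j \<le> parts_ge \<pi> i"
proof -
  let ?A = "{i. 0 < i \<and> j \<le> parts_ge \<pi> i}"
  have "?A \<subseteq> {i. 0 < i \<and> 0 < parts_ge \<pi> i}"
    using assms by auto
  then have "finite ?A" using finite_parts_ge_support by (rule finite_subset)
  then have "i \<le> card ?A \<longleftrightarrow> i \<in> ?A"
  proof (rule le_card_down_closed_iff)
    show "b \<in> ?A" if "a \<in> ?A" "0 < b" "b \<le> a" for a b
      using that parts_ge_antimono[of b a \<pi>] by auto
  qed (use assms(1) in auto)
  then show ?thesis using assms by (simp add: parts_ge_conjugate)
qed

lemma conjugate_conjugate:
  assumes "\<forall>x\<in>#\<pi>. 0 < x"
  shows "conjugate (conjugate \<pi>) = \<pi>"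
proof (rule parts_ge_inject)
  fix i :: nat assume i: "0 < i"
  have "{j. 0 < j \<and> i \<le> parts_ge (conjugate \<pi>) j} = {1..parts_ge \<pi> i}"
    using le_parts_ge_conjugate_iff[OF i] by auto
  then show "parts_ge (conjugate (conjugate \<pi>)) i = parts_ge \<pi> i"
    using i by (simp add: parts_ge_conjugate)
qed (use assms conjugate_pos in auto)

lemma sum_parts_ge: "\<forall>x\<in>#\<pi>. x \<le> B \<Longrightarrow> (\<Sum>i=1..B. parts_ge \<pi> i) = sum_mset \<pi>"
proof (induction \<pi>)
  case (add x \<pi>)
  have "{1..B} \<inter> {i. i \<le> x} = {1..x}" using add.prems by auto
  then have "(\<Sum>i=1..B. if i \<le> x then 1 else 0) = x"
    by (simp add: sum.If_cases)
  with add show ?case by (simp add: sum.distrib)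
qed simp

lemma sum_mset_conjugate: "sum_mset (conjugate \<pi>) = sum_mset \<pi>"
proof -
  have "sum_mset (conjugate \<pi>) = (\<Sum>i\<in>{i. 0 < i \<and> 0 < parts_ge \<pi> i}. parts_ge \<pi> i)"
    by (simp add: conjugate_def sum_unfold_sum_mset)
  also have "\<dots> = (\<Sum>i=1..sum_mset \<pi>. parts_ge \<pi> i)"
    using parts_ge_support_subset by (intro sum.mono_neutral_left) auto
  also have "\<dots> = sum_mset \<pi>"
    by (rule sum_parts_ge) (simp add: member_le_sum_mset_nat)
  finally show ?thesis .
qed

lemma size_conjugate: "\<pi> \<noteq> {#} \<Longrightarrow> size (conjugate \<pi>) = Max (set_mset \<pi>)"
  using finite_parts_ge_support by (simp add: conjugate_def parts_ge_support_eq)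

lemma Max_conjugate:
  assumes "\<forall>x\<in>#\<pi>. 0 < x" "\<pi> \<noteq> {#}"
  shows "Max (set_mset (conjugate \<pi>)) = size \<pi>"
proof (rule Max_eqI)
  have "0 < size \<pi>" using assms(2) by (simp add: nonempty_has_size)
  then show "size \<pi> \<in> set_mset (conjugate \<pi>)"
    unfolding set_mset_conjugate parts_ge_1[OF assms(1), symmetric] by auto
  show "y \<le> size \<pi>" if "y \<in> set_mset (conjugate \<pi>)" for y
    using that parts_ge_antimono[of 1 _ \<pi>] parts_ge_1[OF assms(1)] by (auto simp: set_mset_conjugate)
qed simp

lemma card_set_mset_conjugate:
  assumes "\<forall>x\<in>#\<pi>. 0 < x"
  shows "card (set_mset (conjugate \<pi>)) = card (set_mset \<pi>)"
proof -
  have same_image: "parts_ge \<pi> ` {i. 0 < i \<and> 0 < parts_ge \<pi> i} = parts_ge \<pi> ` set_mset \<pi>"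
  proof (intro equalityI image_subsetI)
    show "parts_ge \<pi> x \<in> parts_ge \<pi> ` {i. 0 < i \<and> 0 < parts_ge \<pi> i}" if "x \<in># \<pi>" for x
      using that assms by (auto simp: parts_ge_pos_iff)
    fix i assume "i \<in> {i. 0 < i \<and> 0 < parts_ge \<pi> i}"
    then have ne: "{x \<in> set_mset \<pi>. i \<le> x} \<noteq> {}" by (auto simp: parts_ge_pos_iff)
    define x where "x = Min {x \<in> set_mset \<pi>. i \<le> x}"
    have x: "x \<in># \<pi>" "i \<le> x" using Min_in[OF _ ne] by (auto simp: x_def)
    \<comment> \<open>no part lies strictly between \<open>i\<close> and the least part \<open>x \<ge> i\<close>\<close>
    have "parts_ge \<pi> i = parts_ge \<pi> x"
      unfolding parts_ge_def using x
      by (intro arg_cong[where f = size] filter_mset_cong) (auto simp: x_def)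
    then show "parts_ge \<pi> i \<in> parts_ge \<pi> ` set_mset \<pi>" using x by auto
  qed
  have "parts_ge \<pi> y < parts_ge \<pi> x" if "x \<in># \<pi>" "x < y" for x y
  proof -
    have "0 < count \<pi> x" using that(1) by simp
    then show ?thesis using parts_ge_Suc[of \<pi> x] parts_ge_antimono[of "Suc x" y \<pi>] that(2) by linarith
  qed
  then have "inj_on (parts_ge \<pi>) (set_mset \<pi>)"
    by (metis inj_onI less_irrefl linorder_neqE_nat)
  then show ?thesis by (simp add: set_mset_conjugate same_image card_image)
qed

lemma size_le_sum_mset_pos: "\<forall>x\<in>#\<pi>. 0 < x \<Longrightarrow> size \<pi> \<le> sum_mset (\<pi>::nat multiset)"
  by (induction \<pi>) auto

lemma sum_mset_mset_set: "finite A \<Longrightarrow> sum_mset (mset_set A) = \<Sum>(A :: nat set)"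
  by (induction rule: finite_induct) auto

lemma finite_pos_msets_sum_le: "finite {\<gamma>::nat multiset. (\<forall>x\<in>#\<gamma>. 0 < x) \<and> sum_mset \<gamma> \<le> n}"
proof (rule finite_subset)
  show "{\<gamma>. (\<forall>x\<in>#\<gamma>. 0 < x) \<and> sum_mset \<gamma> \<le> n} \<subseteq> (\<Union>s\<le>n. multisets_of_size {1..n} s)"
  proof safe
    fix \<gamma> :: "nat multiset" assume \<gamma>: "\<forall>x\<in>#\<gamma>. 0 < x" "sum_mset \<gamma> \<le> n"
    then have "set_mset \<gamma> \<subseteq> {1..n}"
      using member_le_sum_mset_nat by (fastforce simp: Suc_le_eq)
    moreover have "size \<gamma> \<le> n" using size_le_sum_mset_pos[OF \<gamma>(1)] \<gamma>(2) by simp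
    ultimately show "\<gamma> \<in> (\<Union>s\<le>n. multisets_of_size {1..n} s)"
      by (auto simp: multisets_of_size_def)
  qed
qed auto

lemma partitions_pos: "\<pi> \<in> partitions n \<Longrightarrow> x \<in># \<pi> \<Longrightarrow> 0 < x"
  by (auto simp: partitions_def)

lemma partitions_nonempty: "0 < n \<Longrightarrow> \<pi> \<in> partitions n \<Longrightarrow> \<pi> \<noteq> {#}"
  by (auto simp: partitions_def)

lemma finite_partitions: "finite (partitions n)"
  by (rule finite_subset[OF _ finite_pos_msets_sum_le[of n]]) (auto simp: partitions_def)

lemma finite_distinct_partitions: "finite (distinct_partitions n)"
  by (rule finite_subset[OF _ finite_partitions[of n]]) (auto simp: distinct_partitions_def)

lemma largest_part_in:
  assumes "0 < n" "\<pi> \<in> partitions n"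
  shows "largest_part \<pi> \<in># \<pi>"
  using partitions_nonempty[OF assms] by (simp add: largest_part_def)

lemma smallest_part_in:
  assumes "0 < n" "\<pi> \<in> partitions n"
  shows "smallest_part \<pi> \<in># \<pi>"
  using partitions_nonempty[OF assms] by (simp add: smallest_part_def)

lemma partitions_part_le: "\<pi> \<in> partitions n \<Longrightarrow> x \<in># \<pi> \<Longrightarrow> x \<le> n"
  using member_le_sum_mset_nat by (auto simp: partitions_def)

lemma num_distinct_parts_bounds:
  assumes "0 < n" "\<pi> \<in> partitions n"
  shows "0 < num_distinct_parts \<pi>" "num_distinct_parts \<pi> \<le> largest_part \<pi>"
proof -
  show "0 < num_distinct_parts \<pi>"
    using partitions_nonempty[OF assms] by (simp add: num_distinct_parts_def card_gt_0_iff)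
  have "set_mset \<pi> \<subseteq> {1..largest_part \<pi>}"
    using partitions_pos[OF assms(2)] by (auto simp: largest_part_def Suc_le_eq)
  then show "num_distinct_parts \<pi> \<le> largest_part \<pi>"
    unfolding num_distinct_parts_def using card_mono[of "{1..largest_part \<pi>}"] by fastforce
qed

lemma conjugate_in_partitions: "\<pi> \<in> partitions n \<Longrightarrow> conjugate \<pi> \<in> partitions n"
  by (auto simp: partitions_def sum_mset_conjugate conjugate_pos)

lemma bij_betw_conjugate: "bij_betw conjugate (partitions n) (partitions n)"
proof -
  have "\<forall>\<pi>\<in>partitions n. conjugate (conjugate \<pi>) = \<pi>"
    by (simp add: conjugate_conjugate partitions_def)
  then show ?thesis
    by (intro bij_betw_byWitness[where f' = conjugate]) (auto intro: conjugate_in_partitions)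
qed

lemma sum_largest_part_conjugate:
  assumes "0 < n"
  shows "(\<Sum>\<pi>\<in>partitions n. if m \<le> largest_part \<pi> then
            (-1) ^ (largest_part \<pi> - m) * int (num_distinct_parts \<pi> choose (largest_part \<pi> - m)) else 0)
       = (\<Sum>p\<in>partitions n. if m \<le> size p then
            (-1) ^ (size p - m) * int (card (set_mset p) choose (size p - m)) else 0)"
  (is "sum ?g _ = sum ?h _")
proof -
  have "sum ?g (partitions n) = (\<Sum>p\<in>partitions n. ?g (conjugate p))"
    using sum.reindex_bij_betw[OF bij_betw_conjugate, of ?g n] by simp
  also have "\<dots> = sum ?h (partitions n)"
    using Max_conjugate card_set_mset_conjugate partitions_nonempty[OF assms]
    by (intro sum.cong) (auto simp: largest_part_def num_distinct_parts_def partitions_def)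
  finally show ?thesis .
qed

section \<open>Distinct partitions with a given smallest part\<close>

definition marked_partitions :: "nat \<Rightarrow> nat \<Rightarrow> (nat multiset \<times> nat set) set" where
  "marked_partitions n m = (SIGMA p:partitions n. {U. U \<subseteq> set_mset p \<and> card U + m = size p})"

lemma sum_marked_partitions:
  "(\<Sum>(p, U)\<in>marked_partitions n m. (-1::int) ^ card U)
     = (\<Sum>p\<in>partitions n. if m \<le> size p then
          (-1) ^ (size p - m) * int (card (set_mset p) choose (size p - m)) else 0)"
proof -
  have marks: "(\<Sum>U | U \<subseteq> set_mset p \<and> card U + m = size p. (-1::int) ^ card U)
      = (if m \<le> size p then (-1) ^ (size p - m) * int (card (set_mset p) choose (size p - m)) else 0)"
    for p
  proof (cases "m \<le> size p")
    case True
    then have "{U. U \<subseteq> set_mset p \<and> card U + m = size p} = {U. U \<subseteq> set_mset p \<and> card U = size p - m}"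
      by auto
    with True show ?thesis by (simp add: n_subsets)
  next
    case False
    then have "{U. U \<subseteq> set_mset p \<and> card U + m = size p} = {}" by auto
    with False show ?thesis by simp
  qed
  have "finite {U. U \<subseteq> set_mset p \<and> card U + m = size p}" for p
    by (rule finite_subset[of _ "Pow (set_mset p)"]) auto
  then have "(\<Sum>(p, U)\<in>marked_partitions n m. (-1::int) ^ card U)
      = (\<Sum>p\<in>partitions n. \<Sum>U | U \<subseteq> set_mset p \<and> card U + m = size p. (-1::int) ^ card U)"
    unfolding marked_partitions_def by (intro sum.Sigma[symmetric]) (auto simp: finite_partitions)
  also have "\<dots> = (\<Sum>p\<in>partitions n. if m \<le> size p then
          (-1) ^ (size p - m) * int (card (set_mset p) choose (size p - m)) else 0)"
    by (rule sum.cong[OF refl marks])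
  finally show ?thesis .
qed

definition sized_pairs :: "nat \<Rightarrow> nat \<Rightarrow> (nat set \<times> nat multiset) set" where
  "sized_pairs n m = {(U, \<beta>). finite U \<and> (\<forall>u\<in>U. 0 < u) \<and> (\<forall>x\<in>#\<beta>. 0 < x) \<and> size \<beta> = m
     \<and> \<Sum>U + sum_mset \<beta> = n}"

lemma sum_marked_partitions_eq_sized_pairs:
  "(\<Sum>(p, U)\<in>marked_partitions n m. (-1::int) ^ card U) = (\<Sum>(U, \<beta>)\<in>sized_pairs n m. (-1) ^ card U)"
proof (rule sum.reindex_bij_witness[where j = "\<lambda>(p, U). (U, p - mset_set U)"
      and i = "\<lambda>(U, \<beta>). (\<beta> + mset_set U, U)"])
  fix a assume "a \<in> marked_partitions n m"
  then obtain p U where a: "a = (p, U)" "p \<in> partitions n" "U \<subseteq> set_mset p" "card U + m = size p"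
    by (auto simp: marked_partitions_def)
  have "finite U" using a(3) finite_subset by blast
  have "mset_set U \<subseteq># p"
    using subset_mset.order_trans[OF subset_imp_msubset_mset_set[OF a(3)] mset_set_set_mset_msubset] by simp
  then have p: "p = (p - mset_set U) + mset_set U" by simp
  show "(\<lambda>(U, \<beta>). (\<beta> + mset_set U, U)) ((\<lambda>(p, U). (U, p - mset_set U)) a) = a"
    using a(1) p by simp
  have "sum_mset p = \<Sum>U + sum_mset (p - mset_set U)"
    using \<open>finite U\<close> arg_cong[OF p, of sum_mset] by (simp add: sum_mset_mset_set)
  moreover have "size p = card U + size (p - mset_set U)"
    using arg_cong[OF p, of size] \<open>finite U\<close> by simp
  moreover have "\<forall>u\<in>U. 0 < u" "\<forall>x\<in>#p - mset_set U. 0 < x"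
    using a(3) partitions_pos[OF a(2)] by (auto dest: in_diffD)
  ultimately show "(\<lambda>(p, U). (U, p - mset_set U)) a \<in> sized_pairs n m"
    using a \<open>finite U\<close> by (simp add: sized_pairs_def partitions_def)
  show "(case (\<lambda>(p, U). (U, p - mset_set U)) a of (U, \<beta>) \<Rightarrow> (-1::int) ^ card U)
      = (case a of (p, U) \<Rightarrow> (-1) ^ card U)"
    using a(1) by simp
next
  fix b assume "b \<in> sized_pairs n m"
  then obtain U \<beta> where b: "b = (U, \<beta>)" "finite U" "\<forall>u\<in>U. 0 < u" "\<forall>x\<in>#\<beta>. 0 < x"
      "size \<beta> = m" "\<Sum>U + sum_mset \<beta> = n"
    by (auto simp: sized_pairs_def)
  show "(\<lambda>(p, U). (U, p - mset_set U)) ((\<lambda>(U, \<beta>). (\<beta> + mset_set U, U)) b) = b"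
    using b(1) by simp
  have "\<beta> + mset_set U \<in> partitions n"
    using b by (auto simp: partitions_def sum_mset_mset_set)
  then show "(\<lambda>(U, \<beta>). (\<beta> + mset_set U, U)) b \<in> marked_partitions n m"
    using b by (auto simp: marked_partitions_def)
qed

definition bounded_pairs :: "nat \<Rightarrow> nat \<Rightarrow> (nat set \<times> nat multiset) set" where
  "bounded_pairs n m = {(U, \<gamma>). finite U \<and> (\<forall>u\<in>U. 0 < u) \<and> (\<forall>x\<in>#\<gamma>. 0 < x \<and> x \<le> m)
     \<and> \<Sum>U + sum_mset \<gamma> + m = n}"

lemma finite_bounded_pairs: "finite (bounded_pairs n m)"
proof (rule finite_subset)
  show "bounded_pairs n m \<subseteq> Pow {1..n} \<times> {\<gamma>. (\<forall>x\<in>#\<gamma>. 0 < x) \<and> sum_mset \<gamma> \<le> n}"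
  proof safe
    fix U \<gamma> u assume "(U, \<gamma>) \<in> bounded_pairs n m" "u \<in> U"
    then have "finite U" "0 < u" "\<Sum>U \<le> n" "u \<in> U" by (auto simp: bounded_pairs_def)
    then show "u \<in> {1..n}" using member_le_sum[of u U "\<lambda>x. x"] by simp
  qed (auto simp: bounded_pairs_def)
qed (simp add: finite_pos_msets_sum_le)

lemma conjugate_of_size:
  assumes "\<forall>x\<in>#\<beta>. 0 < x" "size \<beta> = m" "0 < m"
  shows "m \<in># conjugate \<beta>" "\<forall>x\<in>#conjugate \<beta>. x \<le> m"
proof -
  have "\<beta> \<noteq> {#}" using assms(2,3) by auto
  then have max: "Max (set_mset (conjugate \<beta>)) = m" using Max_conjugate assms by simp
  have "0 < sum_mset \<beta>" using size_le_sum_mset_pos[OF assms(1)] assms(2,3) by simp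
  then have "conjugate \<beta> \<noteq> {#}" by (metis sum_mset_conjugate sum_mset.empty less_irrefl)
  then show "m \<in># conjugate \<beta>" using max by (metis Max_in finite_set_mset set_mset_eq_empty_iff)
  show "\<forall>x\<in>#conjugate \<beta>. x \<le> m" using max by auto
qed

lemma sum_sized_pairs_eq_bounded_pairs:
  assumes "0 < m"
  shows "(\<Sum>(U, \<beta>)\<in>sized_pairs n m. (-1::int) ^ card U) = (\<Sum>(U, \<gamma>)\<in>bounded_pairs n m. (-1) ^ card U)"
proof (rule sum.reindex_bij_witness[where j = "\<lambda>(U, \<beta>). (U, conjugate \<beta> - {#m#})"
      and i = "\<lambda>(U, \<gamma>). (U, conjugate (add_mset m \<gamma>))"])
  fix a assume "a \<in> sized_pairs n m"
  then obtain U \<beta> where a: "a = (U, \<beta>)" "finite U" "\<forall>u\<in>U. 0 < u" "\<forall>x\<in>#\<beta>. 0 < x"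
      "size \<beta> = m" "\<Sum>U + sum_mset \<beta> = n"
    by (auto simp: sized_pairs_def)
  have \<beta>: "conjugate \<beta> = add_mset m (conjugate \<beta> - {#m#})"
    using conjugate_of_size(1)[OF a(4,5) assms] by simp
  show "(\<lambda>(U, \<gamma>). (U, conjugate (add_mset m \<gamma>))) ((\<lambda>(U, \<beta>). (U, conjugate \<beta> - {#m#})) a) = a"
    using a(1) conjugate_conjugate[OF a(4)] by (simp flip: \<beta>)
  have "sum_mset (conjugate \<beta> - {#m#}) + m = sum_mset \<beta>"
    using arg_cong[OF \<beta>, of sum_mset] by (simp add: sum_mset_conjugate)
  moreover have "\<forall>x\<in>#conjugate \<beta> - {#m#}. 0 < x \<and> x \<le> m"
    using conjugate_of_size(2)[OF a(4,5) assms] conjugate_pos[of _ \<beta>] by (auto dest: in_diffD)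
  ultimately show "(\<lambda>(U, \<beta>). (U, conjugate \<beta> - {#m#})) a \<in> bounded_pairs n m"
    using a by (auto simp: bounded_pairs_def)
  show "(case (\<lambda>(U, \<beta>). (U, conjugate \<beta> - {#m#})) a of (U, \<gamma>) \<Rightarrow> (-1::int) ^ card U)
      = (case a of (U, \<beta>) \<Rightarrow> (-1) ^ card U)"
    using a(1) by simp
next
  fix b assume "b \<in> bounded_pairs n m"
  then obtain U \<gamma> where b: "b = (U, \<gamma>)" "finite U" "\<forall>u\<in>U. 0 < u" "\<forall>x\<in>#\<gamma>. 0 < x \<and> x \<le> m"
      "\<Sum>U + sum_mset \<gamma> + m = n"
    by (auto simp: bounded_pairs_def)
  have pos: "\<forall>x\<in>#add_mset m \<gamma>. 0 < x" using b(4) assms by auto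
  show "(\<lambda>(U, \<beta>). (U, conjugate \<beta> - {#m#})) ((\<lambda>(U, \<gamma>). (U, conjugate (add_mset m \<gamma>))) b) = b"
    using b(1) conjugate_conjugate[OF pos] by simp
  have "Max (set_mset (add_mset m \<gamma>)) = m" using b(4) by (intro Max_eqI) auto
  then have "size (conjugate (add_mset m \<gamma>)) = m" by (simp add: size_conjugate)
  then show "(\<lambda>(U, \<gamma>). (U, conjugate (add_mset m \<gamma>))) b \<in> sized_pairs n m"
    using b conjugate_pos by (auto simp: sized_pairs_def sum_mset_conjugate)
qed

definition toggle_candidates :: "nat \<Rightarrow> nat set \<times> nat multiset \<Rightarrow> nat set" where
  "toggle_candidates m x = {u \<in> fst x. u \<le> m} \<union> set_mset (snd x)"

definition toggle :: "nat \<Rightarrow> nat set \<times> nat multiset \<Rightarrow> nat set \<times> nat multiset" where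
  "toggle m x = (let a = Min (toggle_candidates m x) in
     if a \<in> fst x then (fst x - {a}, add_mset a (snd x)) else (insert a (fst x), snd x - {#a#}))"

lemma toggle_candidates_insert:
  "a \<le> m \<Longrightarrow> toggle_candidates m (insert a U, \<gamma>) = insert a (toggle_candidates m (U, \<gamma>))"
  by (auto simp: toggle_candidates_def)

lemma toggle_candidates_add_mset:
  "toggle_candidates m (U, add_mset a \<gamma>) = insert a (toggle_candidates m (U, \<gamma>))"
  by (auto simp: toggle_candidates_def)

lemma toggle_swap:
  assumes "finite U" "a \<notin> U" "a \<le> m" "\<forall>b\<in>toggle_candidates m (U, \<gamma>). a \<le> b"
  shows "toggle m (insert a U, \<gamma>) = (U, add_mset a \<gamma>)"
    and "toggle m (U, add_mset a \<gamma>) = (insert a U, \<gamma>)"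
proof -
  have "finite (toggle_candidates m (U, \<gamma>))" using assms(1) by (simp add: toggle_candidates_def)
  then have "Min (insert a (toggle_candidates m (U, \<gamma>))) = a"
    using assms(4) by (intro Min_eqI) auto
  then show "toggle m (insert a U, \<gamma>) = (U, add_mset a \<gamma>)"
    and "toggle m (U, add_mset a \<gamma>) = (insert a U, \<gamma>)"
    using assms(2,3) by (simp_all add: toggle_def toggle_candidates_insert toggle_candidates_add_mset)
qed

lemma bounded_pairs_swap:
  assumes "a \<notin> U" "0 < a" "a \<le> m"
  shows "(insert a U, \<gamma>) \<in> bounded_pairs n m \<longleftrightarrow> (U, add_mset a \<gamma>) \<in> bounded_pairs n m"
  using assms by (cases "finite U") (auto simp: bounded_pairs_def add.assoc)

lemma bounded_pairs_toggle_cases: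
  assumes "x \<in> bounded_pairs n m" "toggle_candidates m x \<noteq> {}"
  obtains U \<gamma> a where "finite U" "a \<notin> U" "0 < a" "a \<le> m" "\<forall>b\<in>toggle_candidates m (U, \<gamma>). a \<le> b"
    "x = (insert a U, \<gamma>) \<or> x = (U, add_mset a \<gamma>)"
proof -
  obtain V \<delta> where x: "x = (V, \<delta>)" "finite V" "\<forall>u\<in>V. 0 < u" "\<forall>y\<in>#\<delta>. 0 < y \<and> y \<le> m"
    using assms(1) by (auto simp: bounded_pairs_def)
  define a where "a = Min (toggle_candidates m x)"
  have fin: "finite (toggle_candidates m x)" using x by (simp add: toggle_candidates_def)
  have "a \<in> toggle_candidates m x" using Min_in[OF fin assms(2)] by (simp add: a_def)
  then have a: "0 < a" "a \<le> m" "a \<in> V \<or> a \<in># \<delta>"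
    using x by (auto simp: toggle_candidates_def)
  have least: "a \<le> b" if "b \<in> toggle_candidates m x" for b
    using Min_le[OF fin that] by (simp add: a_def)
  show ?thesis
  proof (cases "a \<in> V")
    case True
    then have "x = (insert a (V - {a}), \<delta>)" using x(1) by auto
    moreover have "toggle_candidates m (V - {a}, \<delta>) \<subseteq> toggle_candidates m x"
      using x(1) by (auto simp: toggle_candidates_def)
    ultimately show ?thesis using x(2) a(1,2) least by (intro that[of "V - {a}" a \<delta>]) auto
  next
    case False
    then have "x = (V, add_mset a (\<delta> - {#a#}))" using x(1) a(3) by simp
    moreover have "toggle_candidates m (V, \<delta> - {#a#}) \<subseteq> toggle_candidates m x"
      using x(1) by (auto simp: toggle_candidates_def dest: in_diffD)
    ultimately show ?thesis using x(2) a(1,2) False least by (intro that[of V a "\<delta> - {#a#}"]) auto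
  qed
qed

lemma sum_bounded_pairs_eq_fixed:
  "(\<Sum>x\<in>bounded_pairs n m. (-1::int) ^ card (fst x))
     = (\<Sum>x\<in>{x \<in> bounded_pairs n m. toggle_candidates m x = {}}. (-1) ^ card (fst x))"
proof -
  let ?f = "\<lambda>x. (-1::int) ^ card (fst x)"
  let ?X = "{x \<in> bounded_pairs n m. toggle_candidates m x \<noteq> {}}"
  have "sum ?f ?X = 0"
  proof (rule sum_involution_eq_0[where h = "toggle m"])
    fix x assume "x \<in> ?X"
    then have "x \<in> bounded_pairs n m" "toggle_candidates m x \<noteq> {}" by auto
    then obtain U \<gamma> a where U: "finite U" "a \<notin> U" "0 < a" "a \<le> m"
        "\<forall>b\<in>toggle_candidates m (U, \<gamma>). a \<le> b" and x: "x = (insert a U, \<gamma>) \<or> x = (U, add_mset a \<gamma>)"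
      by (rule bounded_pairs_toggle_cases)
    \<comment> \<open>\<open>toggle\<close> swaps the two pairs, which lie in \<open>?X\<close> together\<close>
    have "(insert a U, \<gamma>) \<in> ?X" "(U, add_mset a \<gamma>) \<in> ?X"
      using \<open>x \<in> ?X\<close> x bounded_pairs_swap[OF U(2-4)]
      by (auto simp: toggle_candidates_insert[OF U(4)] toggle_candidates_add_mset)
    with x show "toggle m x \<in> ?X" "toggle m (toggle m x) = x" "toggle m x \<noteq> x"
        "?f (toggle m x) + ?f x = 0"
      using toggle_swap[OF U(1,2,4,5)] U(1,2) by auto
  qed
  moreover have "sum ?f (bounded_pairs n m)
      = sum ?f {x \<in> bounded_pairs n m. toggle_candidates m x = {}} + sum ?f ?X"
    using finite_bounded_pairs[of n m]
    by (subst sum.union_disjoint[symmetric]) (auto intro: sum.cong)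
  ultimately show ?thesis by simp
qed

lemma mset_set_set_mset_distinct:
  assumes "\<forall>x. count \<pi> x \<le> 1"
  shows "mset_set (set_mset \<pi>) = \<pi>"
proof (rule multiset_eqI)
  fix x
  show "count (mset_set (set_mset \<pi>)) x = count \<pi> x"
    using assms[rule_format, of x] by (cases "x \<in># \<pi>") (auto simp: count_eq_zero_iff le_Suc_eq)
qed

lemma fixed_bounded_pairs_iff:
  assumes "0 < m"
  shows "(U, \<gamma>) \<in> bounded_pairs n m \<and> toggle_candidates m (U, \<gamma>) = {}
     \<longleftrightarrow> finite U \<and> (\<forall>u\<in>U. m < u) \<and> \<gamma> = {#} \<and> \<Sum>U + m = n"
  using assms by (auto simp: bounded_pairs_def toggle_candidates_def not_le)

lemma sum_fixed_bounded_pairs: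
  assumes "0 < n" "0 < m"
  shows "(\<Sum>x\<in>{x \<in> bounded_pairs n m. toggle_candidates m x = {}}. (-1::int) ^ card (fst x))
       = (\<Sum>\<pi>\<in>distinct_partitions n. if smallest_part \<pi> = m then (-1) ^ (num_parts \<pi> - 1) else 0)"
proof -
  let ?D = "{\<pi> \<in> distinct_partitions n. smallest_part \<pi> = m}"
  have "(\<Sum>x\<in>{x \<in> bounded_pairs n m. toggle_candidates m x = {}}. (-1::int) ^ card (fst x))
      = (\<Sum>\<pi>\<in>?D. (-1) ^ (num_parts \<pi> - 1))"
  proof (rule sum.reindex_bij_witness[where j = "\<lambda>x. mset_set (insert m (fst x))"
        and i = "\<lambda>\<pi>. (set_mset \<pi> - {m}, {#})"])
    fix x assume "x \<in> {x \<in> bounded_pairs n m. toggle_candidates m x = {}}"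
    then obtain U where x: "x = (U, {#})" "finite U" "\<forall>u\<in>U. m < u" "\<Sum>U + m = n"
      using fixed_bounded_pairs_iff[OF assms(2)] by (cases x) auto
    then have "m \<notin> U" by auto
    then show "(set_mset (mset_set (insert m (fst x))) - {m}, {#}) = x" using x by simp
    show "(-1) ^ (num_parts (mset_set (insert m (fst x))) - 1) = (-1::int) ^ card (fst x)"
      using x \<open>m \<notin> U\<close> by (simp add: num_parts_def)
    have "Min (insert m U) = m" using x(2,3) by (intro Min_eqI) (auto simp: less_imp_le)
    then show "mset_set (insert m (fst x)) \<in> ?D"
      using x assms(2) \<open>m \<notin> U\<close>
      by (auto simp: distinct_partitions_def partitions_def smallest_part_def sum_mset_mset_set
          count_mset_set')
  next
    fix \<pi> assume "\<pi> \<in> ?D"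
    then have \<pi>: "\<pi> \<in> partitions n" "\<forall>x. count \<pi> x \<le> 1" "Min (set_mset \<pi>) = m"
      by (auto simp: distinct_partitions_def smallest_part_def)
    have "m \<in># \<pi>" using smallest_part_in[OF assms(1) \<pi>(1)] \<pi>(3) by (simp add: smallest_part_def)
    have set: "mset_set (set_mset \<pi>) = \<pi>" by (rule mset_set_set_mset_distinct[OF \<pi>(2)])
    then show "mset_set (insert m (fst (set_mset \<pi> - {m}, {#}))) = \<pi>"
      using \<open>m \<in># \<pi>\<close> by (simp add: insert_absorb)
    have "\<forall>u\<in>set_mset \<pi> - {m}. m < u" using \<pi>(3) by (auto simp flip: \<pi>(3) intro: le_neq_trans)
    moreover have "\<Sum>(set_mset \<pi> - {m}) + m = n"
      using \<pi>(1) \<open>m \<in># \<pi>\<close> sum_mset_mset_set[of "set_mset \<pi>"]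
      by (simp add: set partitions_def sum.remove)
    ultimately show "(set_mset \<pi> - {m}, {#}) \<in> {x \<in> bounded_pairs n m. toggle_candidates m x = {}}"
      using fixed_bounded_pairs_iff[OF assms(2)] by simp
  qed
  also have "\<dots> = (\<Sum>\<pi>\<in>distinct_partitions n. if smallest_part \<pi> = m then (-1) ^ (num_parts \<pi> - 1) else 0)"
    by (rule sum.inter_filter[OF finite_distinct_partitions])
  finally show ?thesis .
qed

theorem signed_count_distinct_partitions_smallest_part:
  assumes "0 < n" "0 < m"
  shows "(\<Sum>\<pi>\<in>distinct_partitions n. if smallest_part \<pi> = m then (-1) ^ (num_parts \<pi> - 1) else 0)
       = (\<Sum>\<pi>\<in>partitions n. if m \<le> largest_part \<pi> then
            (-1) ^ (largest_part \<pi> - m) * int (num_distinct_parts \<pi> choose (largest_part \<pi> - m)) else 0)"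
proof -
  have "(\<Sum>\<pi>\<in>partitions n. if m \<le> largest_part \<pi> then
            (-1) ^ (largest_part \<pi> - m) * int (num_distinct_parts \<pi> choose (largest_part \<pi> - m)) else 0)
      = (\<Sum>(p, U)\<in>marked_partitions n m. (-1::int) ^ card U)"
    by (simp add: sum_largest_part_conjugate[OF assms(1)] sum_marked_partitions)
  also have "\<dots> = (\<Sum>(U, \<gamma>)\<in>bounded_pairs n m. (-1) ^ card U)"
    by (simp add: sum_marked_partitions_eq_sized_pairs sum_sized_pairs_eq_bounded_pairs[OF assms(2)])
  also have "\<dots> = (\<Sum>x\<in>{x \<in> bounded_pairs n m. toggle_candidates m x = {}}. (-1) ^ card (fst x))"
    by (simp add: case_prod_beta sum_bounded_pairs_eq_fixed)
  finally show ?thesis by (simp add: sum_fixed_bounded_pairs[OF assms])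
qed

section \<open>Comparing coefficients\<close>

definition lhs_coeff :: "nat \<Rightarrow> nat \<Rightarrow> int" where
  "lhs_coeff n m = (\<Sum>\<pi>\<in>distinct_partitions n. if m \<le> smallest_part \<pi> then (-1) ^ (num_parts \<pi> - 1) else 0)"

definition rhs_coeff :: "nat \<Rightarrow> nat \<Rightarrow> int" where
  "rhs_coeff n m = (\<Sum>\<pi>\<in>partitions n. if m \<le> largest_part \<pi> then
      (-1) ^ (largest_part \<pi> - m) * int ((num_distinct_parts \<pi> - 1) choose (largest_part \<pi> - m)) else 0)"

lemma lhs_coeff_Suc:
  "lhs_coeff n m = lhs_coeff n (Suc m)
     + (\<Sum>\<pi>\<in>distinct_partitions n. if smallest_part \<pi> = m then (-1) ^ (num_parts \<pi> - 1) else 0)"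
  unfolding lhs_coeff_def sum.distrib[symmetric] by (rule sum.cong) auto

lemma rhs_coeff_Suc:
  assumes "0 < n"
  shows "rhs_coeff n m = rhs_coeff n (Suc m)
     + (\<Sum>\<pi>\<in>partitions n. if m \<le> largest_part \<pi> then
          (-1) ^ (largest_part \<pi> - m) * int (num_distinct_parts \<pi> choose (largest_part \<pi> - m)) else 0)"
  unfolding rhs_coeff_def sum.distrib[symmetric]
proof (rule sum.cong[OF refl])
  fix \<pi> assume "\<pi> \<in> partitions n"
  then obtain v where v: "num_distinct_parts \<pi> = Suc v"
    using num_distinct_parts_bounds(1)[OF assms] gr0_implies_Suc by blast
  \<comment> \<open>Pascal's rule \<open>(v + 1) choose (d + 1) = v choose d + v choose (d + 1)\<close>\<close>
  show "(if m \<le> largest_part \<pi> then (-1) ^ (largest_part \<pi> - m)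
          * int ((num_distinct_parts \<pi> - 1) choose (largest_part \<pi> - m)) else 0)
      = (if Suc m \<le> largest_part \<pi> then (-1) ^ (largest_part \<pi> - Suc m)
          * int ((num_distinct_parts \<pi> - 1) choose (largest_part \<pi> - Suc m)) else 0)
        + (if m \<le> largest_part \<pi> then (-1) ^ (largest_part \<pi> - m)
          * int (num_distinct_parts \<pi> choose (largest_part \<pi> - m)) else (0::int))"
  proof (cases "m < largest_part \<pi>")
    case True
    then obtain d where "largest_part \<pi> - m = Suc d" "largest_part \<pi> - Suc m = d"
      by (metis Suc_diff_Suc)
    with True v show ?thesis by (simp add: algebra_simps)
  qed (auto simp: v le_Suc_eq)
qed

lemma lhs_coeff_eq_0:
  assumes "0 < n" "n < m"
  shows "lhs_coeff n m = 0"
  unfolding lhs_coeff_def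
proof (intro sum.neutral ballI)
  fix \<pi> assume "\<pi> \<in> distinct_partitions n"
  then have "smallest_part \<pi> \<le> n"
    using partitions_part_le smallest_part_in[OF assms(1)] by (auto simp: distinct_partitions_def)
  with assms(2) show "(if m \<le> smallest_part \<pi> then (-1) ^ (num_parts \<pi> - 1) else 0) = (0::int)"
    by simp
qed

lemma rhs_coeff_eq_0:
  assumes "0 < n" "n < m"
  shows "rhs_coeff n m = 0"
  unfolding rhs_coeff_def
proof (intro sum.neutral ballI)
  fix \<pi> assume "\<pi> \<in> partitions n"
  then have "largest_part \<pi> \<le> n" using partitions_part_le largest_part_in[OF assms(1)] by auto
  with assms(2) show "(if m \<le> largest_part \<pi> then (-1) ^ (largest_part \<pi> - m)
      * int ((num_distinct_parts \<pi> - 1) choose (largest_part \<pi> - m)) else 0) = (0::int)"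
    by simp
qed

lemma lhs_coeff_eq_rhs_coeff:
  assumes "0 < n" "0 < m"
  shows "lhs_coeff n m = rhs_coeff n m"
proof (cases "m \<le> Suc n")
  case True
  then show ?thesis using assms(2)
  proof (induction m rule: inc_induct)
    case (step m)
    then show ?case
      using lhs_coeff_Suc[of n m] rhs_coeff_Suc[OF assms(1), of m]
        signed_count_distinct_partitions_smallest_part[OF assms(1)] by simp
  qed (simp add: lhs_coeff_eq_0 rhs_coeff_eq_0 assms(1))
qed (simp add: lhs_coeff_eq_0 rhs_coeff_eq_0 assms(1))

lemma sum_atLeastAtMost_as_if:
  fixes s n :: nat
  assumes "s \<le> n"
  shows "(\<Sum>j=1..s. f j) = (\<Sum>m=1..n. if m \<le> s then f m else 0)"
proof -
  have "(\<Sum>m=1..n. if m \<le> s then f m else 0) = sum f {m \<in> {1..n}. m \<le> s}"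
    by (rule sum.inter_filter[symmetric]) simp
  also have "{m \<in> {1..n}. m \<le> s} = {1..s}" using assms by auto
  finally show ?thesis by simp
qed

lemma sum_distinct_partitions_as_coeff:
  fixes f :: "nat \<Rightarrow> 'a::comm_ring_1"
  assumes "0 < n"
  shows "(\<Sum>\<pi>\<in>distinct_partitions n. (-1) ^ (num_parts \<pi> - 1) * (\<Sum>j=1..smallest_part \<pi>. f j))
       = (\<Sum>m=1..n. of_int (lhs_coeff n m) * f m)"
proof -
  have "(-1) ^ (num_parts \<pi> - 1) * (\<Sum>j=1..smallest_part \<pi>. f j)
      = (\<Sum>m=1..n. if m \<le> smallest_part \<pi> then (-1) ^ (num_parts \<pi> - 1) * f m else 0)"
    if "\<pi> \<in> distinct_partitions n" for \<pi>
  proof -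
    have "smallest_part \<pi> \<le> n"
      using that partitions_part_le smallest_part_in[OF assms] by (auto simp: distinct_partitions_def)
    then show ?thesis
      by (simp only: sum_distrib_left sum_atLeastAtMost_as_if mult_zero_right if_distrib)
  qed
  then have "(\<Sum>\<pi>\<in>distinct_partitions n. (-1) ^ (num_parts \<pi> - 1) * (\<Sum>j=1..smallest_part \<pi>. f j))
      = (\<Sum>\<pi>\<in>distinct_partitions n. \<Sum>m=1..n.
           if m \<le> smallest_part \<pi> then (-1) ^ (num_parts \<pi> - 1) * f m else 0)"
    by (rule sum.cong[OF refl])
  also have "\<dots> = (\<Sum>m=1..n. \<Sum>\<pi>\<in>distinct_partitions n.
           if m \<le> smallest_part \<pi> then (-1) ^ (num_parts \<pi> - 1) * f m else 0)"
    by (rule sum.swap)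
  also have "\<dots> = (\<Sum>m=1..n. of_int (lhs_coeff n m) * f m)"
    unfolding lhs_coeff_def of_int_sum sum_distrib_right by (intro sum.cong) auto
  finally show ?thesis .
qed

lemma sum_binomial_reflect:
  fixes f :: "nat \<Rightarrow> 'a::comm_ring_1"
  assumes "0 < v" "v \<le> L" "L \<le> n"
  shows "(\<Sum>j=0..v-1. (-1) ^ j * of_nat ((v - 1) choose j) * f (L - j))
       = (\<Sum>m=1..n. if m \<le> L then (-1) ^ (L - m) * of_nat ((v - 1) choose (L - m)) * f m else 0)"
proof -
  have "(\<Sum>j=0..v-1. (-1) ^ j * of_nat ((v - 1) choose j) * f (L - j))
      = (\<Sum>j=0..L-1. (-1) ^ j * of_nat ((v - 1) choose j) * f (L - j))"
    using assms by (intro sum.mono_neutral_left) (auto simp: binomial_eq_0)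
  also have "\<dots> = (\<Sum>m=1..L. (-1) ^ (L - m) * of_nat ((v - 1) choose (L - m)) * f m)"
    using assms by (intro sum.reindex_bij_witness[where i = "\<lambda>m. L - m" and j = "\<lambda>j. L - j"]) auto
  also have "\<dots> = (\<Sum>m=1..n. if m \<le> L then (-1) ^ (L - m) * of_nat ((v - 1) choose (L - m)) * f m else 0)"
    using assms(3) by (rule sum_atLeastAtMost_as_if)
  finally show ?thesis .
qed

lemma sum_partitions_as_coeff:
  fixes f :: "nat \<Rightarrow> 'a::comm_ring_1"
  assumes "0 < n"
  shows "(\<Sum>\<pi>\<in>partitions n. \<Sum>j=0..num_distinct_parts \<pi> - 1.
            (-1) ^ j * of_nat ((num_distinct_parts \<pi> - 1) choose j) * f (largest_part \<pi> - j))
       = (\<Sum>m=1..n. of_int (rhs_coeff n m) * f m)"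
proof -
  have "(\<Sum>\<pi>\<in>partitions n. \<Sum>j=0..num_distinct_parts \<pi> - 1.
            (-1) ^ j * of_nat ((num_distinct_parts \<pi> - 1) choose j) * f (largest_part \<pi> - j))
      = (\<Sum>\<pi>\<in>partitions n. \<Sum>m=1..n. if m \<le> largest_part \<pi> then (-1) ^ (largest_part \<pi> - m)
            * of_nat ((num_distinct_parts \<pi> - 1) choose (largest_part \<pi> - m)) * f m else 0)"
  proof (rule sum.cong[OF refl])
    fix \<pi> assume "\<pi> \<in> partitions n"
    then show "(\<Sum>j=0..num_distinct_parts \<pi> - 1.
            (-1) ^ j * of_nat ((num_distinct_parts \<pi> - 1) choose j) * f (largest_part \<pi> - j))
      = (\<Sum>m=1..n. if m \<le> largest_part \<pi> then (-1) ^ (largest_part \<pi> - m)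
            * of_nat ((num_distinct_parts \<pi> - 1) choose (largest_part \<pi> - m)) * f m else 0)"
      using num_distinct_parts_bounds[OF assms] partitions_part_le largest_part_in[OF assms]
      by (intro sum_binomial_reflect) auto
  qed
  also have "\<dots> = (\<Sum>m=1..n. \<Sum>\<pi>\<in>partitions n. if m \<le> largest_part \<pi> then (-1) ^ (largest_part \<pi> - m)
            * of_nat ((num_distinct_parts \<pi> - 1) choose (largest_part \<pi> - m)) * f m else 0)"
    by (rule sum.swap)
  also have "\<dots> = (\<Sum>m=1..n. of_int (rhs_coeff n m) * f m)"
    unfolding rhs_coeff_def of_int_sum sum_distrib_right by (intro sum.cong) auto
  finally show ?thesis .
qed

theorem sum_distinct_partitions_smallest_part_eq:
  fixes f :: "nat \<Rightarrow> 'a::comm_ring_1"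
  assumes "0 < n"
  shows "(\<Sum>\<pi>\<in>distinct_partitions n. (-1) ^ (num_parts \<pi> - 1) * (\<Sum>j=1..smallest_part \<pi>. f j))
       = (\<Sum>\<pi>\<in>partitions n. \<Sum>j=0..num_distinct_parts \<pi> - 1.
            (-1) ^ j * of_nat ((num_distinct_parts \<pi> - 1) choose j) * f (largest_part \<pi> - j))"
proof -
  have "(\<Sum>m=1..n. of_int (lhs_coeff n m) * f m) = (\<Sum>m=1..n. of_int (rhs_coeff n m) * f m)"
    using lhs_coeff_eq_rhs_coeff[OF assms] by (intro sum.cong) auto
  then show ?thesis
    by (simp only: sum_distinct_partitions_as_coeff[OF assms] sum_partitions_as_coeff[OF assms])
qed

lemma sum_partitions_one_part_size:
  assumes "0 < n"
  shows "(\<Sum>\<pi>\<in>{\<pi> \<in> partitions n. num_distinct_parts \<pi> = 1}. g (largest_part \<pi>)) = (\<Sum>d | d dvd n. g d)"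
proof (rule sum.reindex_bij_witness[where j = largest_part and i = "\<lambda>d. replicate_mset (n div d) d"])
  fix \<pi> assume "\<pi> \<in> {\<pi> \<in> partitions n. num_distinct_parts \<pi> = 1}"
  then have \<pi>: "\<pi> \<in> partitions n" "card (set_mset \<pi>) = 1" by (auto simp: num_distinct_parts_def)
  from \<pi>(2) obtain d where d: "set_mset \<pi> = {d}" by (rule card_1_singletonE)
  have \<pi>_eq: "\<pi> = replicate_mset (count \<pi> d) d"
    by (rule multiset_eqI) (use d in \<open>auto simp: count_eq_zero_iff\<close>)
  have "largest_part \<pi> = d" "0 < d" using d partitions_pos[OF \<pi>(1)] by (auto simp: largest_part_def)
  moreover have "count \<pi> d * d = n"
    using \<pi>(1) arg_cong[OF \<pi>_eq, of sum_mset] by (simp add: partitions_def)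
  ultimately show "replicate_mset (n div largest_part \<pi>) (largest_part \<pi>) = \<pi>"
    and "largest_part \<pi> \<in> {d. d dvd n}"
    using \<pi>_eq by (auto dest: sym)
next
  fix d assume "d \<in> {d. d dvd n}"
  then obtain q where q: "n = d * q" "0 < d" "0 < q" using assms by (auto elim!: dvdE)
  then show "largest_part (replicate_mset (n div d) d) = d"
    and "replicate_mset (n div d) d \<in> {\<pi> \<in> partitions n. num_distinct_parts \<pi> = 1}"
    by (auto simp: largest_part_def partitions_def num_distinct_parts_def)
qed simp

theorem theorem2p6:
  fixes n :: nat and k c :: complex
  assumes "0 < n"
  shows "(\<Sum>\<pi>\<in>distinct_partitions n. (-1) ^ (num_parts \<pi> - 1) *
            (\<Sum>j=1..smallest_part \<pi>. (of_nat j) powr k * c ^ j))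
       = (\<Sum>\<pi>\<in>{\<pi>\<in>partitions n. 2 \<le> num_distinct_parts \<pi>}.
            (\<Sum>j=0..num_distinct_parts \<pi> - 1.
               (-1) ^ j * of_nat ((num_distinct_parts \<pi> - 1) choose j) *
               (of_nat (largest_part \<pi> - j)) powr k * c ^ (largest_part \<pi> - j)))
         + sigma_kc k c n"
proof -
  define f :: "nat \<Rightarrow> complex" where "f j = of_nat j powr k * c ^ j" for j
  define T where "T \<pi> = (\<Sum>j=0..num_distinct_parts \<pi> - 1.
    (-1) ^ j * of_nat ((num_distinct_parts \<pi> - 1) choose j) * f (largest_part \<pi> - j))" for \<pi>
  have "partitions n = {\<pi> \<in> partitions n. 2 \<le> num_distinct_parts \<pi>} \<union> {\<pi> \<in> partitions n. num_distinct_parts \<pi> = 1}"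
    using num_distinct_parts_bounds(1)[OF assms] by fastforce
  then have "sum T (partitions n)
      = sum T {\<pi> \<in> partitions n. 2 \<le> num_distinct_parts \<pi>} + sum T {\<pi> \<in> partitions n. num_distinct_parts \<pi> = 1}"
    using finite_partitions[of n] by (subst sum.union_disjoint[symmetric]) auto
  moreover have "sum T {\<pi> \<in> partitions n. num_distinct_parts \<pi> = 1} = sigma_kc k c n"
    using sum_partitions_one_part_size[OF assms, of f] by (simp add: T_def sigma_kc_def f_def)
  ultimately show ?thesis
    using sum_distinct_partitions_smallest_part_eq[OF assms, of f] by (simp add: T_def f_def mult.assoc)
qed

end
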